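(* Let $m,n\ge 0$ be integers with $p=2m+n\ge 2$, and let $\Delta\ge 0$. Let $\mathcal{G}_\Delta$ be the family of simple graphs with maximum degree at most $\Delta$. Then $$\omega_{r(m,n)}(\mathcal{G}_\Delta)\le \left\lfloor \frac{p-1}{p}\Delta^2\right\rfloor+\Delta+1.$$ Equivalently: for every $(m,n)$-colored mixed graph $G$ whose underlying graph has maximum degree at most $\Delta$, every relative $(m,n)$-clique of $G$ has at most $\lfloor \frac{p-1}{p}\Delta^2\rfloor+\Delta+1$ vertices.
   Context: An $(m,n)$-colored mixed graph $G$ is obtained from a simple graph $U(G)$ (its underlying graph) by giving each edge either an orientation and one of $m$ arc colors $\{1,\dots,m\}$ (making it an arc) or leaving it unoriented with one of $n$ edge colors $\{1,\dots,n\}$. For adjacent $u,v$, the adjacency type of $uv$ is: "arc from $u$ to $v$ of color $i$", "arc from $v$ to $u$ of color $i$", or "edge of color $j$". Two pairs $uv$, $wx$ have the same adjacency type if both are arcs $u\to v$, $w\to x$ of the same color, or both arcs $v\to u$, $x\to w$ of the same color, or both edges of the same color. A colored homomorphism $f:G\to H$ between $(m,n)$-colored mixed graphs (both with simple underlying graphs) is a vertex map such that for every adjacent pair $uv$ of $G$, $f(u)f(v)$ is adjacent in $H$ with the same adjacency type as $uv$. A set $R\subseteq V(G)$ is a relative $(m,n)$-clique if for every pair of distinct $u,v\in R$ and every colored homomorphism $f:G\to H$, $f(u)\ne f(v)$. $\omega_{r(m,n)}(G)$ is the maximum size of a relative $(m,n)$-clique of $G$; for a simple graph $\Gamma$, $\omega_{r(m,n)}(\Gamma)$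 is the maximum of $\omega_{r(m,n)}(G)$ over all $(m,n)$-colored mixed graphs $G$ with $U(G)=\Gamma$; for a family $\mathcal{F}$, $\omega_{r(m,n)}(\mathcal{F})=\max_{\Gamma\in\mathcal{F}}\omega_{r(m,n)}(\Gamma)$. A 2-path $uvw$ in $U(G)$ is special if $uv$ and $vw$ do not have the same adjacency type (comparing $uv$ with $vw$, i.e. reading both in the direction $u\to v$, $v\to w$). It is known that two distinct vertices lie together in some relative clique (equivalently, cannot be identified by any colored homomorphism) iff they are adjacent or joined by a special 2-path. *)

theory Defs
  imports Complex_Main
begin

text \<open>Adjacency types of an ordered pair (u,v) of adjacent vertices:
  ArcTo i  = arc from u to v of colour i,
  ArcFrom i = arc from v to u of colour i,
  Edge j   = (unoriented) edge of colour j.\<close>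
datatype adjtype = ArcTo nat | ArcFrom nat | Edge nat

text \<open>An (m,n)-coloured mixed graph is given by a vertex set V and a map A with
  A u v = Some t iff u,v are adjacent and uv has adjacency type t
  (None iff non-adjacent).\<close>
definition mixed_graph :: "nat \<Rightarrow> nat \<Rightarrow> 'a set \<Rightarrow> ('a \<Rightarrow> 'a \<Rightarrow> adjtype option) \<Rightarrow> bool" where
  "mixed_graph m n V A \<longleftrightarrow>
     (\<forall>u v. A u v \<noteq> None \<longrightarrow> u \<in> V \<and> v \<in> V \<and> u \<noteq> v) \<and>
     (\<forall>u v i. A u v = Some (ArcTo i) \<longleftrightarrow> A v u = Some (ArcFrom i)) \<and>
     (\<forall>u v j. A u v = Some (Edge j) \<longrightarrow> A v u = Some (Edge j)) \<and>
     (\<forall>u v i. A u v = Some (ArcTo i) \<longrightarrow> 1 \<le> i \<and> i \<le> m) \<and>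
     (\<forall>u v j. A u v = Some (Edge j) \<longrightarrow> 1 \<le> j \<and> j \<le> n)"

definition colored_hom ::
  "'a set \<Rightarrow> ('a \<Rightarrow> 'a \<Rightarrow> adjtype option) \<Rightarrow> 'b set \<Rightarrow> ('b \<Rightarrow> 'b \<Rightarrow> adjtype option) \<Rightarrow> ('a \<Rightarrow> 'b) \<Rightarrow> bool" where
  "colored_hom V A W B f \<longleftrightarrow>
     (\<forall>u\<in>V. f u \<in> W) \<and> (\<forall>u v. A u v \<noteq> None \<longrightarrow> B (f u) (f v) = A u v)"

text \<open>Relative (m,n)-clique. Target graphs H range over (m,n)-coloured mixed graphs
  whose vertices are drawn from the same type as those of G.\<close>
definition relative_clique :: "nat \<Rightarrow> nat \<Rightarrow> 'a set \<Rightarrow> ('a \<Rightarrow> 'a \<Rightarrow> adjtype option) \<Rightarrow> 'a set \<Rightarrow> bool" where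
  "relative_clique m n V A R \<longleftrightarrow> R \<subseteq> V \<and>
     (\<forall>u\<in>R. \<forall>v\<in>R. u \<noteq> v \<longrightarrow>
        (\<forall>(W :: 'a set) B f. mixed_graph m n W B \<and> colored_hom V A W B f \<longrightarrow> f u \<noteq> f v))"

definition nbrs :: "('a \<Rightarrow> 'a \<Rightarrow> adjtype option) \<Rightarrow> 'a \<Rightarrow> 'a set" where
  "nbrs A u = {v. A u v \<noteq> None}"

definition max_degree_le :: "'a set \<Rightarrow> ('a \<Rightarrow> 'a \<Rightarrow> adjtype option) \<Rightarrow> nat \<Rightarrow> bool" where
  "max_degree_le V A D \<longleftrightarrow> (\<forall>u\<in>V. finite (nbrs A u) \<and> card (nbrs A u) \<le> D)"

end

theory Submission
  imports Defs "HOL-Analysis.Convex"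
begin

text \<open>Two non-adjacent vertices u, w of a relative clique R must be seen with different
  adjacency types by some common neighbour v; otherwise giving u all adjacencies of w and
  collapsing w onto u is a colored homomorphism identifying them. Now count the ordered pairs
  of distinct vertices of R, with p = 2m + n. At most |R|\<Delta> of them are adjacent. A vertex v
  sees its neighbours in R with only p adjacency types, so it separates at most a (p-1)/p
  fraction of the |N(v) \<inter> R|^2 pairs of them, i.e. at most (p-1)/p \<Delta> |N(v) \<inter> R|;
  and the sum of |N(v) \<inter> R| over all v is at most |R|\<Delta>. Hence
  |R|(|R| - 1) \<le> |R|\<Delta> + (p-1)/p \<Delta> |R|\<Delta>, which after dividing by |R| is the bound.\<close>

lemma card_same_label_pairs:
  assumes S: "finite S" and T: "finite T" and g: "g ` S \<subseteq> T"
  shows "card {(x, y) \<in> S \<times> S. g x = g y} = (\<Sum>t\<in>T. card {x \<in> S. g x = t} ^ 2)"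
proof -
  have "{(x, y) \<in> S \<times> S. g x = g y} = (\<Union>t\<in>T. {x \<in> S. g x = t} \<times> {x \<in> S. g x = t})"
    using g by auto
  also have "card \<dots> = (\<Sum>t\<in>T. card ({x \<in> S. g x = t} \<times> {x \<in> S. g x = t}))"
    using S T by (intro card_UN_disjoint) auto
  finally show ?thesis
    by (simp add: card_cartesian_product power2_eq_square)
qed

text \<open>Cauchy-Schwarz on the label classes: with at most p labels, at least |S|^2/p
  ordered pairs of S share their label.\<close>
lemma card_distinct_label_pairs_le:
  assumes S: "finite S" and T: "finite T" and g: "g ` S \<subseteq> T" and p: "card T \<le> p"
  shows "real p * card {(x, y) \<in> S \<times> S. g x \<noteq> g y} \<le> (real p - 1) * card S ^ 2"
proof -
  let ?same = "{(x, y) \<in> S \<times> S. g x = g y}" and ?diff = "{(x, y) \<in> S \<times> S. g x \<noteq> g y}"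
  have "finite ?same" "finite ?diff"
    using S by (auto intro: finite_subset[of _ "S \<times> S"])
  then have "card (?same \<union> ?diff) = card ?same + card ?diff"
    by (intro card_Un_disjoint) auto
  moreover have "?same \<union> ?diff = S \<times> S"
    by auto
  ultimately have "card ?same + card ?diff = card (S \<times> S)"
    by simp
  then have split: "real (card ?same) + card ?diff = card S ^ 2"
    by (simp add: card_cartesian_product power2_eq_square flip: of_nat_add of_nat_mult)
  have "card S = (\<Sum>t\<in>T. card {x \<in> S. g x = t})"
    using sum.group[OF S T g, of "\<lambda>_. 1 :: nat"] by simp
  then have "real (card S) ^ 2 = (\<Sum>t\<in>T. real (card {x \<in> S. g x = t})) ^ 2"
    by simp
  also have "\<dots> \<le> (\<Sum>t\<in>T. real (card {x \<in> S. g x = t}) ^ 2) * card T"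
    by (rule sum_squared_le_sum_of_squares)
  also have "\<dots> = real (card ?same) * card T"
    unfolding card_same_label_pairs[OF S T g] by simp
  also have "\<dots> \<le> real (card ?same) * p"
    using p by (intro mult_left_mono) auto
  finally have "real (card S) ^ 2 \<le> real p * card ?same"
    by (simp only: mult.commute)
  moreover have "real p * card ?diff = real p * card S ^ 2 - real p * card ?same"
    unfolding split[symmetric] by (simp add: algebra_simps)
  ultimately show ?thesis
    by (simp add: left_diff_distrib)
qed

fun flip_adjtype :: "adjtype \<Rightarrow> adjtype" where
  "flip_adjtype (ArcTo i) = ArcFrom i"
| "flip_adjtype (ArcFrom i) = ArcTo i"
| "flip_adjtype (Edge j) = Edge j"

definition adjtypes :: "nat \<Rightarrow> nat \<Rightarrow> adjtype set" where
  "adjtypes m n = ArcTo ` {1..m} \<union> ArcFrom ` {1..m} \<union> Edge ` {1..n}"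

lemma card_adjtypes: "card (adjtypes m n) = 2 * m + n"
proof -
  have "card (adjtypes m n) = card (ArcTo ` {1..m} \<union> ArcFrom ` {1..m}) + card (Edge ` {1..n})"
    unfolding adjtypes_def by (rule card_Un_disjoint) auto
  also have "card (ArcTo ` {1..m} \<union> ArcFrom ` {1..m}) = card (ArcTo ` {1..m}) + card (ArcFrom ` {1..m})"
    by (rule card_Un_disjoint) auto
  finally show ?thesis
    by (simp add: card_image inj_on_def)
qed

lemma finite_adjtypes [simp]: "finite (adjtypes m n)"
  by (simp add: adjtypes_def)

lemma mixed_graph_adjacent_in:
  "mixed_graph m n V A \<Longrightarrow> A u v \<noteq> None \<Longrightarrow> u \<in> V \<and> v \<in> V \<and> u \<noteq> v"
  unfolding mixed_graph_def by blast

lemma mixed_graph_flip: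
  assumes "mixed_graph m n V A"
  shows "A u v = map_option flip_adjtype (A v u)"
proof -
  have arc: "\<And>u v i. A u v = Some (ArcTo i) \<longleftrightarrow> A v u = Some (ArcFrom i)"
    and edge: "\<And>u v j. A u v = Some (Edge j) \<Longrightarrow> A v u = Some (Edge j)"
    using assms unfolding mixed_graph_def by blast+
  show ?thesis
  proof (cases "A v u")
    case None
    show ?thesis
    proof (cases "A u v")
      case (Some t)
      then show ?thesis
        using None arc[of u v] arc[of v u] edge[of u v] by (cases t) auto
    qed (simp add: None)
  next
    case (Some t)
    then show ?thesis
    proof (cases t)
      case (ArcTo i)
      with Some have "A u v = Some (ArcFrom i)" using arc[of v u i] by simp
      with Some ArcTo show ?thesis by simp
    next
      case (ArcFrom i)
      with Some have "A u v = Some (ArcTo i)" using arc[of u v i] by simp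
      with Some ArcFrom show ?thesis by simp
    next
      case (Edge j)
      with Some have "A u v = Some (Edge j)" using edge[of v u j] by simp
      with Some Edge show ?thesis by simp
    qed
  qed
qed

lemma mixed_graph_adjtype:
  assumes G: "mixed_graph m n V A" and uv: "A u v = Some t"
  shows "t \<in> adjtypes m n"
proof -
  have arc: "\<And>u v i. A u v = Some (ArcTo i) \<Longrightarrow> 1 \<le> i \<and> i \<le> m"
    and edge: "\<And>u v j. A u v = Some (Edge j) \<Longrightarrow> 1 \<le> j \<and> j \<le> n"
    using G unfolding mixed_graph_def by blast+
  show ?thesis
  proof (cases t)
    case (ArcTo i)
    with uv arc show ?thesis
      by (auto simp: adjtypes_def)
  next
    case (ArcFrom i)
    with uv have "A v u = Some (ArcTo i)"
      using mixed_graph_flip[OF G, of v u] by simp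
    with ArcFrom arc show ?thesis
      by (auto simp: adjtypes_def)
  next
    case (Edge j)
    with uv edge show ?thesis
      by (auto simp: adjtypes_def)
  qed
qed

lemma mixed_graph_intro:
  assumes supp: "\<And>u v. A u v \<noteq> None \<Longrightarrow> u \<in> V \<and> v \<in> V \<and> u \<noteq> v"
    and flip: "\<And>u v. A u v = map_option flip_adjtype (A v u)"
    and range: "\<And>u v t. A u v = Some t \<Longrightarrow> t \<in> adjtypes m n"
  shows "mixed_graph m n V A"
proof -
  have "A u v = Some (ArcTo i) \<longleftrightarrow> A v u = Some (ArcFrom i)" for u v i
  proof
    show "A v u = Some (ArcFrom i)" if "A u v = Some (ArcTo i)"
      using flip[of v u] unfolding that by simp
    show "A u v = Some (ArcTo i)" if "A v u = Some (ArcFrom i)"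
      using flip[of u v] unfolding that by simp
  qed
  moreover have "A v u = Some (Edge j)" if "A u v = Some (Edge j)" for u v j
    using flip[of v u] unfolding that by simp
  moreover have "A u v = Some (ArcTo i) \<Longrightarrow> 1 \<le> i \<and> i \<le> m" for u v i
    using range[of u v "ArcTo i"] by (auto simp: adjtypes_def)
  moreover have "A u v = Some (Edge j) \<Longrightarrow> 1 \<le> j \<and> j \<le> n" for u v j
    using range[of u v "Edge j"] by (auto simp: adjtypes_def)
  ultimately show ?thesis
    unfolding mixed_graph_def using supp by blast
qed

lemma mixed_graph_nbrs_sym: "mixed_graph m n V A \<Longrightarrow> u \<in> nbrs A v \<longleftrightarrow> v \<in> nbrs A u"
  using mixed_graph_flip[of m n V A v u] by (simp add: nbrs_def)

lemma mixed_graph_nbrs_subset: "mixed_graph m n V A \<Longrightarrow> nbrs A u \<subseteq> V"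
  using mixed_graph_adjacent_in by (fastforce simp: nbrs_def)

text \<open>u additionally receives all adjacencies of w, so that collapsing w onto u,
  i.e. the map id(w := u), can be a colored homomorphism.\<close>
definition identify :: "('a \<Rightarrow> 'a \<Rightarrow> adjtype option) \<Rightarrow> 'a \<Rightarrow> 'a \<Rightarrow> 'a \<Rightarrow> 'a \<Rightarrow> adjtype option" where
  "identify A u w a b = (if A a b = None then A ((id(u := w)) a) ((id(u := w)) b) else A a b)"

lemma mixed_graph_identify:
  assumes G: "mixed_graph m n V A" and u: "u \<in> V"
  shows "mixed_graph m n V (identify A u w)"
proof -
  let ?h = "id(u := w)"
  have h_in: "x \<in> V" if "?h x \<in> V" for x
    using that u by (cases "x = u") auto
  have "a \<in> V \<and> b \<in> V \<and> a \<noteq> b" if "identify A u w a b \<noteq> None" for a b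
    using that mixed_graph_adjacent_in[OF G, of a b] mixed_graph_adjacent_in[OF G, of "?h a" "?h b"]
      h_in[of a] h_in[of b]
    unfolding identify_def by (auto simp del: fun_upd_apply split: if_splits)
  moreover have "identify A u w b a = map_option flip_adjtype (identify A u w a b)" for a b
    using mixed_graph_flip[OF G, of b a] mixed_graph_flip[OF G, of "?h b" "?h a"]
    unfolding identify_def by (simp del: fun_upd_apply)
  moreover have "t \<in> adjtypes m n" if "identify A u w a b = Some t" for a b t
    using that mixed_graph_adjtype[OF G] unfolding identify_def by (auto split: if_splits)
  ultimately show ?thesis
    by (intro mixed_graph_intro) blast+
qed

lemma colored_hom_identify:
  assumes G: "mixed_graph m n V A" and u: "u \<in> V" and uw: "A u w = None"
    and agree: "\<And>v. A u v \<noteq> None \<Longrightarrow> A w v \<noteq> None \<Longrightarrow> A u v = A w v"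
  shows "colored_hom V A V (identify A u w) (id(w := u))"
  unfolding colored_hom_def
proof (intro conjI ballI allI impI)
  show "(id(w := u)) a \<in> V" if "a \<in> V" for a
    using that u by simp
  fix a b
  assume ab: "A a b \<noteq> None"
  have wu: "A w u = None"
    using mixed_graph_flip[OF G, of w u] uw by simp
  show "identify A u w ((id(w := u)) a) ((id(w := u)) b) = A a b"
  proof (cases "a = w")
    case True
    with ab wu mixed_graph_adjacent_in[OF G, of a b] have "b \<noteq> w" "b \<noteq> u" by auto
    with True ab agree[of b] show ?thesis
      by (auto simp: identify_def)
  next
    case a_ne_w: False
    show ?thesis
    proof (cases "b = w")
      case True
      with ab uw have "a \<noteq> u" by auto
      have "A a u = A a w" if "A a u \<noteq> None"
      proof -
        have "A u a \<noteq> None" "A w a \<noteq> None"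
          using that ab True mixed_graph_flip[OF G, of u a] mixed_graph_flip[OF G, of w a] by auto
        then have "A u a = A w a"
          by (rule agree)
        then show ?thesis
          using mixed_graph_flip[OF G, of a u] mixed_graph_flip[OF G, of a w] by simp
      qed
      with True a_ne_w \<open>a \<noteq> u\<close> show ?thesis
        by (auto simp: identify_def)
    next
      case False
      with a_ne_w show ?thesis
        by (simp add: identify_def ab)
    qed
  qed
qed

lemma relative_clique_nonadjacent_separated:
  assumes G: "mixed_graph m n V A" and R: "relative_clique m n V A R"
    and u: "u \<in> R" and w: "w \<in> R" and uw: "u \<noteq> w" "A u w = None"
  shows "\<exists>v. A u v \<noteq> None \<and> A w v \<noteq> None \<and> A u v \<noteq> A w v"
proof (rule ccontr)
  assume "\<not> ?thesis"
  then have agree: "\<And>v. A u v \<noteq> None \<Longrightarrow> A w v \<noteq> None \<Longrightarrow> A u v = A w v"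
    by blast
  have "u \<in> V"
    using R u by (auto simp: relative_clique_def)
  then have "mixed_graph m n V (identify A u w)" "colored_hom V A V (identify A u w) (id(w := u))"
    using mixed_graph_identify[OF G] colored_hom_identify[OF G _ uw(2) agree] by auto
  with R u w uw(1) have "(id(w := u)) u \<noteq> (id(w := u)) w"
    unfolding relative_clique_def by blast
  then show False
    by (simp add: id_def)
qed

definition separated_pairs :: "('a \<Rightarrow> 'a \<Rightarrow> adjtype option) \<Rightarrow> 'a set \<Rightarrow> 'a \<Rightarrow> ('a \<times> 'a) set" where
  "separated_pairs A R v = {(x, y) \<in> (nbrs A v \<inter> R) \<times> (nbrs A v \<inter> R). A x v \<noteq> A y v}"

lemma relative_clique_pairs_subset:
  assumes G: "mixed_graph m n V A" and R: "relative_clique m n V A R"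
  shows "{(x, y) \<in> R \<times> R. x \<noteq> y} \<subseteq> (SIGMA x:R. nbrs A x \<inter> R) \<union> (\<Union>v\<in>V. separated_pairs A R v)"
proof clarify
  fix x y
  assume xy: "x \<in> R" "y \<in> R" "x \<noteq> y" and "(x, y) \<notin> (\<Union>v\<in>V. separated_pairs A R v)"
  then have sep: "(x, y) \<notin> separated_pairs A R v" if "v \<in> V" for v
    using that by blast
  show "y \<in> nbrs A x"
  proof (rule ccontr)
    assume "y \<notin> nbrs A x"
    then obtain v where v: "A x v \<noteq> None" "A y v \<noteq> None" "A x v \<noteq> A y v"
      using relative_clique_nonadjacent_separated[OF G R xy] by (auto simp: nbrs_def)
    then have "v \<in> V" "x \<in> nbrs A v" "y \<in> nbrs A v"
      using mixed_graph_adjacent_in[OF G] mixed_graph_nbrs_sym[OF G] by (auto simp: nbrs_def)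
    with sep v xy show False
      by (auto simp: separated_pairs_def)
  qed
qed

lemma card_separated_pairs_le:
  assumes G: "mixed_graph m n V A" and R: "finite R"
  shows "real (2 * m + n) * card (separated_pairs A R v) \<le> (real (2 * m + n) - 1) * card (nbrs A v \<inter> R) ^ 2"
proof -
  have "(\<lambda>x. A x v) ` (nbrs A v \<inter> R) \<subseteq> Some ` adjtypes m n"
    using mixed_graph_adjtype[OF G] mixed_graph_nbrs_sym[OF G] by (fastforce simp: nbrs_def)
  moreover have "card (Some ` adjtypes m n) \<le> 2 * m + n"
    by (simp add: card_image card_adjtypes)
  ultimately show ?thesis
    unfolding separated_pairs_def using R by (intro card_distinct_label_pairs_le) auto
qed

lemma card_adjacent_pairs_le:
  assumes D: "max_degree_le V A D" and R: "finite R" "R \<subseteq> V"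
  shows "card (SIGMA x:R. nbrs A x \<inter> R) \<le> card R * D"
proof -
  have "card (SIGMA x:R. nbrs A x \<inter> R) = (\<Sum>x\<in>R. card (nbrs A x \<inter> R))"
    using R by simp
  also have "\<dots> \<le> (\<Sum>x\<in>R. D)"
    using D R by (intro sum_mono) (auto simp: max_degree_le_def intro: le_trans[OF card_mono])
  finally show ?thesis
    by simp
qed

lemma sum_card_nbrs_inter_le:
  assumes G: "mixed_graph m n V A" and D: "max_degree_le V A D" and V: "finite V"
    and R: "finite R" "R \<subseteq> V"
  shows "(\<Sum>v\<in>V. card (nbrs A v \<inter> R)) \<le> card R * D"
proof -
  have "(\<Sum>v\<in>V. card (nbrs A v \<inter> R)) = (\<Sum>v\<in>V. \<Sum>x\<in>R. of_bool (x \<in> nbrs A v))"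
    using R by (simp add: conj_commute Int_commute)
  also have "\<dots> = (\<Sum>x\<in>R. \<Sum>v\<in>V. of_bool (v \<in> nbrs A x))"
    using mixed_graph_nbrs_sym[OF G] by (subst sum.swap) simp
  also have "\<dots> = (\<Sum>x\<in>R. card (nbrs A x))"
    using V mixed_graph_nbrs_subset[OF G] by (simp add: Int_absorb1 Int_def[symmetric])
  also have "\<dots> \<le> (\<Sum>x\<in>R. D)"
    using D R by (intro sum_mono) (auto simp: max_degree_le_def)
  finally show ?thesis
    by simp
qed

lemma card_offdiag:
  assumes "finite R"
  shows "card {(x, y) \<in> R \<times> R. x \<noteq> y} = card R * (card R - 1)"
proof -
  have "{(x, y) \<in> R \<times> R. x \<noteq> y} = (SIGMA x:R. R - {x})"
    by auto
  with assms show ?thesis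
    by simp
qed

lemma relative_clique_card_offdiag_le:
  assumes V: "finite V" and G: "mixed_graph m n V A" and R: "relative_clique m n V A R"
  shows "card {(x, y) \<in> R \<times> R. x \<noteq> y}
    \<le> card (SIGMA x:R. nbrs A x \<inter> R) + (\<Sum>v\<in>V. card (separated_pairs A R v))"
proof -
  have fR: "finite R"
    using R V by (auto simp: relative_clique_def intro: finite_subset)
  have "card {(x, y) \<in> R \<times> R. x \<noteq> y}
      \<le> card ((SIGMA x:R. nbrs A x \<inter> R) \<union> (\<Union>v\<in>V. separated_pairs A R v))"
    using relative_clique_pairs_subset[OF G R] fR V
    by (intro card_mono) (auto simp: separated_pairs_def intro: finite_subset[of _ "R \<times> R"])
  also have "\<dots> \<le> card (SIGMA x:R. nbrs A x \<inter> R) + (\<Sum>v\<in>V. card (separated_pairs A R v))"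
    by (rule order_trans[OF card_Un_le add_left_mono[OF card_UN_le[OF V]]])
  finally show ?thesis .
qed

lemma relative_clique_pair_count:
  assumes p: "0 < 2 * m + n" and V: "finite V" and G: "mixed_graph m n V A"
    and D: "max_degree_le V A D" and R: "relative_clique m n V A R"
  defines "P \<equiv> real (2 * m + n)" and "r \<equiv> real (card R)"
  shows "P * (r * (r - 1)) \<le> P * (r * D) + (P - 1) * D * (r * D)"
proof -
  let ?N = "\<lambda>v. nbrs A v \<inter> R" and ?Adj = "SIGMA x:R. nbrs A x \<inter> R" and ?sep = "separated_pairs A R"
  have RV: "R \<subseteq> V" and fR: "finite R"
    using R V by (auto simp: relative_clique_def intro: finite_subset)
  have "real (card R * (card R - 1)) \<le> real (card ?Adj + (\<Sum>v\<in>V. card (?sep v)))"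
    using relative_clique_card_offdiag_le[OF V G R] unfolding card_offdiag[OF fR] by (rule of_nat_mono)
  moreover have "real (card R * (card R - 1)) = r * (r - 1)"
    unfolding r_def by (cases "card R") (auto simp: algebra_simps)
  ultimately have pairs: "r * (r - 1) \<le> card ?Adj + (\<Sum>v\<in>V. real (card (?sep v)))"
    by (simp only: of_nat_add of_nat_sum)
  have adj: "real (card ?Adj) \<le> r * D"
    using card_adjacent_pairs_le[OF D fR RV] unfolding r_def by (simp flip: of_nat_mult)
  have sep: "P * card (?sep v) \<le> (P - 1) * D * card (?N v)" if "v \<in> V" for v
  proof -
    have "card (?N v) \<le> D"
      using D that by (auto simp: max_degree_le_def intro: le_trans[OF card_mono])
    then have "real (card (?N v)) ^ 2 \<le> real D * real (card (?N v))"
      by (simp add: power2_eq_square mult_right_mono)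
    then have "(P - 1) * real (card (?N v)) ^ 2 \<le> (P - 1) * (real D * real (card (?N v)))"
      using p unfolding P_def by (intro mult_left_mono) auto
    then show ?thesis
      using order_trans[OF card_separated_pairs_le[OF G fR, of v]] unfolding P_def by (simp add: mult.assoc)
  qed
  have nbrs: "(\<Sum>v\<in>V. real (card (?N v))) \<le> r * D"
    using sum_card_nbrs_inter_le[OF G D V fR RV] unfolding r_def by (simp flip: of_nat_sum of_nat_mult)
  have "P * (r * (r - 1)) \<le> P * card ?Adj + (\<Sum>v\<in>V. P * card (?sep v))"
    using mult_left_mono[OF pairs, of P] unfolding P_def by (simp add: distrib_left sum_distrib_left)
  also have "\<dots> \<le> P * (r * D) + (P - 1) * D * (\<Sum>v\<in>V. real (card (?N v)))"
    using adj sep unfolding P_def by (simp add: sum_distrib_left mult_left_mono sum_mono add_mono)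
  also have "\<dots> \<le> P * (r * D) + (P - 1) * D * (r * D)"
    using nbrs p unfolding P_def by (intro add_left_mono mult_left_mono) auto
  finally show ?thesis .
qed

lemma relative_clique_card_le:
  assumes p: "0 < 2 * m + n" and V: "finite V" and G: "mixed_graph m n V A"
    and D: "max_degree_le V A D" and R: "relative_clique m n V A R"
  shows "real (card R) - 1 \<le> real D + (real (2 * m + n) - 1) / real (2 * m + n) * real D ^ 2"
proof (cases "card R = 0")
  case False
  let ?p = "real (2 * m + n)" and ?r = "real (card R)"
  have cancel: "r - 1 \<le> d + (P - 1) / P * d ^ 2"
    if "0 < P" and "P * (r - 1) \<le> P * d + (P - 1) * d * d" for P r d :: real
    using that by (simp add: field_simps power2_eq_square)
  have "?r * (?p * (?r - 1)) \<le> ?r * (?p * D + (?p - 1) * D * D)"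
    using relative_clique_pair_count[OF assms] by (simp only: algebra_simps)
  with False have "?p * (?r - 1) \<le> ?p * D + (?p - 1) * D * D"
    by (simp add: mult_le_cancel_left_pos)
  with p show ?thesis
    by (intro cancel) auto
next
  case True
  have "1 \<le> real (2 * m + n)"
    using p by linarith
  then have "0 \<le> (real (2 * m + n) - 1) / real (2 * m + n) * real D ^ 2"
    by simp
  with True show ?thesis
    by simp
qed

theorem mainTheorem1:
  fixes m n D :: nat and V :: "'a set" and A :: "'a \<Rightarrow> 'a \<Rightarrow> adjtype option" and R :: "'a set"
  assumes "2 * m + n \<ge> 2"
    and "finite V"
    and "mixed_graph m n V A"
    and "max_degree_le V A D"
    and "relative_clique m n V A R"
  shows "real (card R) \<le>
    of_int \<lfloor>real (2 * m + n - 1) / real (2 * m + n) * real D ^ 2\<rfloor> + real D + 1"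
proof -
  let ?X = "real (2 * m + n - 1) / real (2 * m + n) * real D ^ 2"
  have "0 < 2 * m + n"
    using assms(1) by linarith
  from relative_clique_card_le[OF this assms(2-5)]
  have "real (card R) - 1 \<le> real D + ?X"
    using assms(1) by (simp add: of_nat_diff)
  then have "int (card R) - 1 - int D \<le> \<lfloor>?X\<rfloor>"
    by (simp add: le_floor_iff)
  then show ?thesis
    by linarith
qed

end
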